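(* Let $R$ be a finite chain ring, $r\ge1$, $l\ge1$, and let $A_1,\dots,A_l\subseteq R$ be pairwise disjoint sets with $|A_i|=r+1$ such that $A=\bigcup_{i=1}^lA_i$ is well-conditioned. Let $g\in R[x]$ be an $(r,l)$-good polynomial on the blocks $A_1,\dots,A_l$. Let $1\le t\le l$, $n=(r+1)l$, $K=rt$. For $a=(a_{i,j})_{0\le i\le r-1,\,0\le j\le t-1}\in R^K$ put $$f_a(x)=\sum_{i=0}^{r-1}\sum_{j=0}^{t-1}a_{i,j}\,g(x)^jx^i,$$ and let $\mathcal C=\{(f_a(\alpha))_{\alpha\in A}: a\in R^K\}\subseteq R^n$ (coordinates indexed by $A$ in a fixed order). Then $\mathcal C$ is a free $R$-linear code of length $n$ and rank $K$ (so $|\mathcal C|=|R|^K$), every coordinate $\alpha\in A_j$ has the recovering set $A_j\setminus\{\alpha\}$ (so $\mathcal C$ has locality $r$), and its minimum distance is $$d=n-K-\frac{K}{r}+2 .$$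
   Context: A finite chain ring is a finite commutative local ring whose ideals are totally ordered by inclusion. $N(R)$ denotes the group of units of $R$. A subset $T\subseteq N(R)$ is subtractive if $a-b\in N(R)$ for all distinct $a,b\in T$. A set $\{a_1,\dots,a_n\}\subseteq R$ is well-conditioned if either it is a subtractive subset of $N(R)$, or for some $i$ the set $\{a_1,\dots,a_n\}\setminus\{a_i\}$ is a subtractive subset of $N(R)$ and $a_i$ is a zero divisor (or $a_i=0$). Given pairwise disjoint subsets $A_1,\dots,A_l\subseteq R$ of size $r+1$, a polynomial $g\in R[x]$ is $(r,l)$-good on the blocks $A_1,\dots,A_l$ if it has degree $r+1$, its leading coefficient is a unit, and it is constant on each $A_i$. A coordinate $i$ has locality $r$ if there is a set $S_i$ of at most $r$ other coordinates with $|\mathcal C_{S_i}|=|\mathcal C_{S_i\cup\{i\}}|$ (puncturing to the indicated coordinates). *)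

theory Defs
  imports "HOL-Computational_Algebra.Polynomial" "HOL-Library.FuncSet"
begin

definition units_of_ring :: "'a::comm_ring_1 set" where
  "units_of_ring = {u. u dvd 1}"

definition is_ideal :: "'a::comm_ring_1 set \<Rightarrow> bool" where
  "is_ideal I \<longleftrightarrow> 0 \<in> I \<and> (\<forall>x\<in>I. \<forall>y\<in>I. x + y \<in> I) \<and> (\<forall>x\<in>I. \<forall>s. s * x \<in> I)"

text \<open>A chain ring: commutative local ring whose ideals are totally ordered by inclusion.
  Finiteness is imposed via the type class finite in the theorem.\<close>
definition chain_ring :: "'a::comm_ring_1 itself \<Rightarrow> bool" where
  "chain_ring _ \<longleftrightarrow>
     (\<forall>x y::'a. \<not> x dvd 1 \<longrightarrow> \<not> y dvd 1 \<longrightarrow> \<not> (x + y) dvd 1) \<and>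
     (\<forall>I J::'a set. is_ideal I \<longrightarrow> is_ideal J \<longrightarrow> I \<subseteq> J \<or> J \<subseteq> I)"

definition subtractive :: "'a::comm_ring_1 set \<Rightarrow> bool" where
  "subtractive T \<longleftrightarrow> T \<subseteq> units_of_ring \<and>
     (\<forall>a\<in>T. \<forall>b\<in>T. a \<noteq> b \<longrightarrow> a - b \<in> units_of_ring)"

definition zero_divisor :: "'a::comm_ring_1 \<Rightarrow> bool" where
  "zero_divisor a \<longleftrightarrow> (\<exists>b. b \<noteq> 0 \<and> a * b = 0)"

definition well_conditioned :: "'a::comm_ring_1 set \<Rightarrow> bool" where
  "well_conditioned A \<longleftrightarrow> subtractive A \<or>
     (\<exists>a\<in>A. subtractive (A - {a}) \<and> (zero_divisor a \<or> a = 0))"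

definition good_poly :: "nat \<Rightarrow> nat \<Rightarrow> (nat \<Rightarrow> 'a::comm_ring_1 set) \<Rightarrow> 'a poly \<Rightarrow> bool" where
  "good_poly r l B g \<longleftrightarrow> degree g = r + 1 \<and> lead_coeff g \<in> units_of_ring \<and>
     (\<forall>i\<in>{1..l}. \<forall>x\<in>B i. \<forall>y\<in>B i. poly g x = poly g y)"

text \<open>Codewords are functions on the coordinate set A (value 0 outside A).\<close>
definition enc_poly :: "nat \<Rightarrow> nat \<Rightarrow> 'a::comm_ring_1 poly \<Rightarrow> (nat \<Rightarrow> nat \<Rightarrow> 'a) \<Rightarrow> 'a poly" where
  "enc_poly r t g a = (\<Sum>i<r. \<Sum>j<t. smult (a i j) (g ^ j * monom 1 i))"

definition tamo_barg_code :: "'a::comm_ring_1 set \<Rightarrow> nat \<Rightarrow> nat \<Rightarrow> 'a poly \<Rightarrow> ('a \<Rightarrow> 'a) set" where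
  "tamo_barg_code A r t g =
     {(\<lambda>\<alpha>. if \<alpha> \<in> A then poly (enc_poly r t g a) \<alpha> else 0) | a. True}"

definition puncture :: "('a \<Rightarrow> 'b::zero) set \<Rightarrow> 'a set \<Rightarrow> ('a \<Rightarrow> 'b) set" where
  "puncture C S = (\<lambda>c. \<lambda>\<alpha>. if \<alpha> \<in> S then c \<alpha> else 0) ` C"

definition recovering_set :: "('a \<Rightarrow> 'b::zero) set \<Rightarrow> 'a \<Rightarrow> 'a set \<Rightarrow> bool" where
  "recovering_set C i S \<longleftrightarrow> i \<notin> S \<and> card (puncture C S) = card (puncture C (insert i S))"

definition has_locality :: "('a \<Rightarrow> 'b::zero) set \<Rightarrow> 'a set \<Rightarrow> nat \<Rightarrow> bool" where
  "has_locality C A r \<longleftrightarrow>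
     (\<forall>i\<in>A. \<exists>S. S \<subseteq> A - {i} \<and> card S \<le> r \<and> recovering_set C i S)"

definition hamming_dist :: "'a set \<Rightarrow> ('a \<Rightarrow> 'b) \<Rightarrow> ('a \<Rightarrow> 'b) \<Rightarrow> nat" where
  "hamming_dist A c c' = card {\<alpha>\<in>A. c \<alpha> \<noteq> c' \<alpha>}"

definition min_dist :: "'a set \<Rightarrow> ('a \<Rightarrow> 'b) set \<Rightarrow> nat" where
  "min_dist A C = Min {hamming_dist A c c' | c c'. c \<in> C \<and> c' \<in> C \<and> c \<noteq> c'}"

definition linear_code :: "'a set \<Rightarrow> ('a \<Rightarrow> 'b::comm_ring_1) set \<Rightarrow> bool" where
  "linear_code A C \<longleftrightarrow> (\<forall>c\<in>C. \<forall>\<alpha>. \<alpha> \<notin> A \<longrightarrow> c \<alpha> = 0) \<and> (\<lambda>_. 0) \<in> C \<and>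
     (\<forall>c\<in>C. \<forall>c'\<in>C. (\<lambda>\<alpha>. c \<alpha> + c' \<alpha>) \<in> C) \<and> (\<forall>s. \<forall>c\<in>C. (\<lambda>\<alpha>. s * c \<alpha>) \<in> C)"

definition free_rank :: "('a \<Rightarrow> 'b::comm_ring_1) set \<Rightarrow> nat \<Rightarrow> bool" where
  "free_rank C K \<longleftrightarrow> (\<exists>b::nat \<Rightarrow> 'a \<Rightarrow> 'b. (\<forall>k<K. b k \<in> C) \<and>
     (\<forall>c\<in>C. \<exists>!w. w \<in> {..<K} \<rightarrow>\<^sub>E UNIV \<and> c = (\<lambda>\<alpha>. \<Sum>k<K. w k * b k \<alpha>)))"

end

theory Submission
  imports Defs
begin

text \<open>
  Over a local ring, a well-conditioned set of evaluation points has pairwise differences that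
  are units, and for such points a nonzero polynomial has at most as many roots as its degree,
  just as over a field. On the block \<open>A\<^sub>j\<close> the polynomial \<open>g\<close> takes a constant value
  \<open>c\<^sub>j\<close>, so \<open>f\<^sub>a\<close> restricted to \<open>A\<^sub>j\<close> coincides with a polynomial of degree \<open>< r\<close> in \<open>x\<close>:
  any \<open>r\<close> of its \<open>r + 1\<close> values determine the last one, which is the locality. Since \<open>g - c\<^sub>j\<close>
  is a unit multiple of \<open>\<Prod>\<^sub>b\<^sub>\<in>\<^sub>A\<^sub>j (x - b)\<close>, the values \<open>c\<^sub>j\<close> also differ by units; interpolating
  first inside each block and then in the values \<open>c\<^sub>j\<close> shows that \<open>a \<mapsto> f\<^sub>a|\<^sub>A\<close> is injective,
  so the code is free of rank \<open>K\<close>. A nonzero codeword vanishes at most at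
  \<open>deg f\<^sub>a \<le> (t - 1)(r + 1) + r - 1\<close> points, and this is attained by
  \<open>\<Prod>\<^sub>s\<^sub>\<in>\<^sub>S (x - s) \<Prod>\<^sub>m\<^sub><\<^sub>t (g - c\<^sub>m)\<close> with \<open>S\<close> an \<open>(r - 1)\<close>-subset of \<open>A\<^sub>t\<close>.
\<close>

section \<open>Polynomials with roots at unit-separated points\<close>

definition unit_differences :: "'a::comm_ring_1 set \<Rightarrow> bool" where
  "unit_differences S \<longleftrightarrow> (\<forall>x\<in>S. \<forall>y\<in>S. x \<noteq> y \<longrightarrow> (x - y) dvd 1)"

lemma unit_differences_subset: "unit_differences S \<Longrightarrow> T \<subseteq> S \<Longrightarrow> unit_differences T"
  unfolding unit_differences_def by blast

lemma unit_mult_eq_0_imp_eq_0: "(a::'a::comm_ring_1) dvd 1 \<Longrightarrow> a * b = 0 \<Longrightarrow> b = 0"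
  by (metis dvdE mult.left_commute mult_1_right mult_zero_right)

lemma mult_dvd_1: "a dvd 1 \<Longrightarrow> b dvd 1 \<Longrightarrow> (a * b :: 'a::comm_monoid_mult) dvd 1"
  using mult_dvd_mono[of a 1 b 1] by simp

lemma prod_dvd_1: "(\<And>x. x \<in> S \<Longrightarrow> f x dvd 1) \<Longrightarrow> prod f S dvd 1"
  using prod_dvd_prod[of S f "\<lambda>_. 1"] by simp

lemma well_conditioned_imp_unit_differences:
  fixes A :: "'a::comm_ring_1 set"
  assumes local: "\<And>x y::'a. \<not> x dvd 1 \<Longrightarrow> \<not> y dvd 1 \<Longrightarrow> \<not> (x + y) dvd 1"
    and wc: "well_conditioned A"
  shows "unit_differences A"
proof (cases "subtractive A")
  case True
  then show ?thesis
    unfolding subtractive_def unit_differences_def units_of_ring_def by blast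
next
  case False
  then obtain z where z: "z \<in> A" "subtractive (A - {z})" "zero_divisor z \<or> z = 0"
    using wc unfolding well_conditioned_def by blast
  obtain b where "b \<noteq> 0" "z * b = 0"
    using z(3) unfolding zero_divisor_def by (metis mult_zero_left zero_neq_one)
  then have "\<not> z dvd 1" using unit_mult_eq_0_imp_eq_0 by blast
  have diff_z: "(x - z) dvd 1" if "x \<in> A" "x \<noteq> z" for x
  proof -
    have "x dvd 1"
      using z(2) that unfolding subtractive_def units_of_ring_def by blast
    \<comment> \<open>\<open>x = (x - z) + z\<close> is a unit while \<open>z\<close> is not\<close>
    then show ?thesis using local[of "x - z" z] \<open>\<not> z dvd 1\<close> by force
  qed
  show ?thesis
    unfolding unit_differences_def
  proof (intro ballI impI)
    fix x y assume xy: "x \<in> A" "y \<in> A" "x \<noteq> y"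
    consider "x = z" | "y = z" | "x \<noteq> z" "y \<noteq> z" by blast
    then show "(x - y) dvd 1"
    proof cases
      case 1
      then show ?thesis using diff_z[of y] xy by (metis minus_diff_eq minus_dvd_iff)
    next
      case 2
      then show ?thesis using diff_z[of x] xy by simp
    next
      case 3
      then show ?thesis
        using z(2) xy unfolding subtractive_def units_of_ring_def by blast
    qed
  qed
qed

lemma
  fixes p q :: "'a::comm_semiring_1 poly"
  assumes "lead_coeff p = 1"
  shows degree_mult_monic: "q \<noteq> 0 \<Longrightarrow> degree (p * q) = degree p + degree q"
    and lead_coeff_mult_monic: "lead_coeff (p * q) = lead_coeff q"
proof -
  have top: "coeff (p * q) (degree p + degree q) = lead_coeff q"
    using coeff_mult_degree_sum[of p q] assms by simp
  show deg: "degree (p * q) = degree p + degree q" if "q \<noteq> 0"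
    using that top by (intro order_antisym degree_mult_le le_degree) simp
  show "lead_coeff (p * q) = lead_coeff q"
    using top deg by (cases "q = 0") simp_all
qed

definition vanishing_poly :: "'a::comm_ring_1 set \<Rightarrow> 'a poly" where
  "vanishing_poly S = (\<Prod>b\<in>S. [:- b, 1:])"

lemma poly_vanishing_poly: "poly (vanishing_poly S) x = (\<Prod>b\<in>S. x - b)"
  unfolding vanishing_poly_def poly_prod by simp

lemma
  assumes "finite S"
  shows degree_vanishing_poly: "degree (vanishing_poly S) = card S"
    and lead_coeff_vanishing_poly: "lead_coeff (vanishing_poly S) = 1"
  using assms unfolding vanishing_poly_def
proof (induction S rule: finite_induct)
  case (insert b S)
  let ?V = "\<Prod>b\<in>S. [:- b, 1:]"
  have "?V \<noteq> 0" using insert.IH(2) by auto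
  then show "degree (\<Prod>b\<in>insert b S. [:- b, 1:]) = card (insert b S)"
    and "lead_coeff (\<Prod>b\<in>insert b S. [:- b, 1:]) = 1"
    using insert degree_mult_monic[of "[:- b, 1:]" ?V] lead_coeff_mult_monic[of "[:- b, 1:]" ?V]
    by simp_all
qed simp_all

lemma vanishing_poly_dvd:
  fixes p :: "'a::comm_ring_1 poly"
  assumes "finite S" "unit_differences S" "\<And>x. x \<in> S \<Longrightarrow> poly p x = 0"
  shows "vanishing_poly S dvd p"
  using assms
proof (induction S arbitrary: p rule: finite_induct)
  case empty
  then show ?case by (simp add: vanishing_poly_def)
next
  case (insert s S)
  have "[:- s, 1:] dvd p"
    using insert.prems(2)[of s] by (simp add: poly_eq_0_iff_dvd)
  then obtain q where q: "p = [:- s, 1:] * q" by (elim dvdE)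
  have q_roots: "poly q x = 0" if x: "x \<in> S" for x
  proof -
    have "(x - s) * poly q x = poly p x"
      by (simp add: q left_diff_distrib)
    also have "\<dots> = 0"
      using insert.prems(2) x by simp
    finally have "(x - s) * poly q x = 0" .
    moreover have "(x - s) dvd 1"
      using insert.prems(1) insert.hyps(2) x unfolding unit_differences_def
      by (metis insert_iff)
    ultimately show ?thesis by (rule unit_mult_eq_0_imp_eq_0[rotated])
  qed
  have "unit_differences S"
    using insert.prems(1) by (rule unit_differences_subset) blast
  then have "vanishing_poly S dvd q"
    using q_roots by (rule insert.IH)
  then have "[:- s, 1:] * vanishing_poly S dvd p"
    unfolding q by (rule mult_dvd_mono[OF dvd_refl])
  then show ?case
    using insert.hyps by (simp add: vanishing_poly_def)
qed

lemma card_roots_le_degree: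
  fixes p :: "'a::comm_ring_1 poly"
  assumes "unit_differences S" "p \<noteq> 0" "\<And>x. x \<in> S \<Longrightarrow> poly p x = 0"
  shows "card S \<le> degree p"
proof (cases "finite S")
  case True
  then have "vanishing_poly S dvd p"
    using assms(1,3) by (rule vanishing_poly_dvd)
  then obtain q where p: "p = vanishing_poly S * q" by (elim dvdE)
  with assms(2) have "q \<noteq> 0" by auto
  then show ?thesis
    using True by (simp add: p degree_mult_monic[OF lead_coeff_vanishing_poly] degree_vanishing_poly)
qed simp

lemma poly_eq_0_if_roots:
  fixes p :: "'a::comm_ring_1 poly"
  assumes "unit_differences S" "\<And>x. x \<in> S \<Longrightarrow> poly p x = 0" "degree p < card S"
  shows "p = 0"
  using card_roots_le_degree[of S p] assms by (meson leD)

lemma eq_smult_vanishing_poly: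
  fixes p :: "'a::comm_ring_1 poly"
  assumes "finite S" "unit_differences S" "\<And>x. x \<in> S \<Longrightarrow> poly p x = 0"
    and "degree p = card S"
  shows "p = smult (lead_coeff p) (vanishing_poly S)"
proof -
  have "vanishing_poly S dvd p"
    using assms(1-3) by (rule vanishing_poly_dvd)
  then obtain q where p: "p = vanishing_poly S * q" by (elim dvdE)
  show ?thesis
  proof (cases "q = 0")
    case False
    then have "degree q = 0"
      using assms(1,4) by (simp add: p degree_mult_monic[OF lead_coeff_vanishing_poly]
          degree_vanishing_poly)
    then obtain c where "q = [:c:]" by (metis degree_0_id)
    moreover have "lead_coeff p = lead_coeff q"
      using p lead_coeff_mult_monic[OF lead_coeff_vanishing_poly[OF assms(1)]] by simp
    ultimately show ?thesis by (simp add: p)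
  qed (simp add: p)
qed

lemma poly_eq_sum_coeff_lessThan:
  fixes p :: "'a::comm_semiring_1 poly"
  assumes "degree p < N"
  shows "poly p x = (\<Sum>i<N. coeff p i * x ^ i)"
proof -
  have "poly p x = (\<Sum>i\<le>degree p. coeff p i * x ^ i)" by (rule poly_altdef)
  also have "\<dots> = (\<Sum>i<N. coeff p i * x ^ i)"
    using assms by (intro sum.mono_neutral_left) (auto simp: coeff_eq_0)
  finally show ?thesis .
qed

lemma mult_add_less_mult:
  fixes i j r t :: nat
  assumes "i < r" "j < t"
  shows "j * r + i < r * t"
proof -
  have "j * r + i < (j + 1) * r" using assms by simp
  also have "\<dots> \<le> t * r" using assms by (intro mult_le_mono1) simp
  finally show ?thesis by (simp add: mult.commute)
qed

lemma sum_mod_div: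
  fixes F :: "nat \<Rightarrow> nat \<Rightarrow> 'b::comm_monoid_add"
  assumes "0 < r"
  shows "(\<Sum>k<r * t. F (k mod r) (k div r)) = (\<Sum>i<r. \<Sum>j<t. F i j)"
proof -
  have bij: "bij_betw (\<lambda>k. (k mod r, k div r)) {..<r * t} ({..<r} \<times> {..<t})"
  proof (rule bij_betwI')
    show "(x mod r, x div r) = (y mod r, y div r) \<longleftrightarrow> x = y" for x y
      by (metis div_mult_mod_eq prod.inject)
    show "(x mod r, x div r) \<in> {..<r} \<times> {..<t}" if "x \<in> {..<r * t}" for x
      using that assms by (auto simp: less_mult_imp_div_less mult.commute)
    show "\<exists>x\<in>{..<r * t}. y = (x mod r, x div r)" if "y \<in> {..<r} \<times> {..<t}" for y
      using that assms by (intro bexI[of _ "snd y * r + fst y"]) (auto simp: mult_add_less_mult)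
  qed
  have "(\<Sum>k<r * t. F (k mod r) (k div r)) = sum (case_prod F) ({..<r} \<times> {..<t})"
    using sum.reindex_bij_betw[OF bij, of "case_prod F"] by simp
  then show ?thesis by (simp add: sum.cartesian_product)
qed

lemma recovering_set_if_determined:
  assumes "i \<notin> S"
    and determined: "\<And>c c'. c \<in> C \<Longrightarrow> c' \<in> C \<Longrightarrow> (\<And>x. x \<in> S \<Longrightarrow> c x = c' x) \<Longrightarrow> c i = c' i"
  shows "recovering_set C i S"
proof -
  define res where "res U c = (\<lambda>x. if x \<in> U then c x else 0)" for U and c :: "'a \<Rightarrow> 'b"
  have puncture_eq: "puncture C U = res U ` C" for U
    unfolding puncture_def res_def ..
  have "inj_on (res S) (res (insert i S) ` C)"
  proof (rule inj_onI)
    fix u v assume "u \<in> res (insert i S) ` C" "v \<in> res (insert i S) ` C" and eq: "res S u = res S v"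
    then obtain c c' where c: "c \<in> C" "c' \<in> C"
      and u: "u = res (insert i S) c" and v: "v = res (insert i S) c'" by blast
    have on_S: "c x = c' x" if "x \<in> S" for x
      using fun_cong[OF eq, of x] that by (simp add: u v res_def)
    then have "c i = c' i" using c by (rule determined[rotated 2])
    then show "u = v" using on_S by (auto simp: u v res_def)
  qed
  moreover have "res S ` res (insert i S) ` C = res S ` C"
    unfolding image_image by (intro image_cong refl) (auto simp: res_def)
  ultimately show ?thesis
    using assms(1) card_image unfolding recovering_set_def puncture_eq by metis
qed

section \<open>The Tamo--Barg code\<close>

locale tamo_barg =
  fixes B :: "nat \<Rightarrow> 'a::comm_ring_1 set" and g :: "'a poly" and r l t :: nat
  assumes r_pos: "1 \<le> r" and t: "1 \<le> t" "t \<le> l"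
    and disjoint_blocks: "\<And>i j. i \<in> {1..l} \<Longrightarrow> j \<in> {1..l} \<Longrightarrow> i \<noteq> j \<Longrightarrow> B i \<inter> B j = {}"
    and card_block: "\<And>i. i \<in> {1..l} \<Longrightarrow> card (B i) = r + 1"
    and unit_differences_points: "unit_differences (\<Union>i\<in>{1..l}. B i)"
    and good: "good_poly r l B g"
begin

definition points :: "'a set" where
  "points = (\<Union>i\<in>{1..l}. B i)"

definition encode :: "(nat \<Rightarrow> nat \<Rightarrow> 'a) \<Rightarrow> 'a \<Rightarrow> 'a" where
  "encode a x = (\<Sum>i<r. \<Sum>j<t. a i j * poly g x ^ j * x ^ i)"

definition codeword :: "(nat \<Rightarrow> nat \<Rightarrow> 'a) \<Rightarrow> 'a \<Rightarrow> 'a" where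
  "codeword a x = (if x \<in> points then encode a x else 0)"

definition block_value :: "nat \<Rightarrow> 'a" where
  "block_value m = poly g (SOME x. x \<in> B m)"

definition block_poly :: "(nat \<Rightarrow> nat \<Rightarrow> 'a) \<Rightarrow> 'a \<Rightarrow> 'a poly" where
  "block_poly a v = (\<Sum>i<r. monom (\<Sum>j<t. a i j * v ^ j) i)"

lemma finite_block: "m \<in> {1..l} \<Longrightarrow> finite (B m)"
  using card_block[of m] by (intro card_ge_0_finite) simp

lemma block_nonempty: "m \<in> {1..l} \<Longrightarrow> B m \<noteq> {}"
  using card_block[of m] by auto

lemma block_subset_points: "m \<in> {1..l} \<Longrightarrow> B m \<subseteq> points"
  unfolding points_def by blast

lemma points_diff_unit: "x \<in> points \<Longrightarrow> y \<in> points \<Longrightarrow> x \<noteq> y \<Longrightarrow> (x - y) dvd 1"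
  using unit_differences_points unfolding points_def unit_differences_def by blast

lemma unit_differences_subset_points: "S \<subseteq> points \<Longrightarrow> unit_differences S"
  using unit_differences_points unfolding points_def by (rule unit_differences_subset)

lemma card_UN_blocks: "M \<subseteq> {1..l} \<Longrightarrow> card (\<Union>m\<in>M. B m) = (r + 1) * card M"
proof -
  assume M: "M \<subseteq> {1..l}"
  have "finite M" using M finite_subset by blast
  then have "card (\<Union>m\<in>M. B m) = (\<Sum>m\<in>M. card (B m))"
  proof (rule card_UN_disjoint)
    show "\<forall>m\<in>M. finite (B m)" using M finite_block by blast
    show "\<forall>m\<in>M. \<forall>m'\<in>M. m \<noteq> m' \<longrightarrow> B m \<inter> B m' = {}"
      using M disjoint_blocks by blast
  qed
  also have "\<dots> = (\<Sum>m\<in>M. r + 1)"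
    using M card_block by (intro sum.cong) auto
  finally show ?thesis by simp
qed

lemma card_points: "card points = (r + 1) * l"
  unfolding points_def by (simp add: card_UN_blocks)

lemma finite_points: "finite points"
  unfolding points_def using finite_block by blast

lemma poly_enc_poly: "poly (enc_poly r t g a) x = encode a x"
  unfolding enc_poly_def encode_def by (simp add: poly_sum poly_monom mult.assoc)

lemma tamo_barg_code_eq: "tamo_barg_code points r t g = range codeword"
proof -
  have "codeword = (\<lambda>a x. if x \<in> points then poly (enc_poly r t g a) x else 0)"
    by (simp add: fun_eq_iff codeword_def poly_enc_poly)
  then show ?thesis unfolding tamo_barg_code_def by auto
qed

lemma degree_g: "degree g = r + 1"
  and lead_coeff_g_unit: "lead_coeff g dvd 1"
  using good unfolding good_poly_def units_of_ring_def by auto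

lemma poly_g_block: "m \<in> {1..l} \<Longrightarrow> x \<in> B m \<Longrightarrow> poly g x = block_value m"
  using good someI[of "\<lambda>x. x \<in> B m" x] unfolding good_poly_def block_value_def by blast

text \<open>\<open>g - c\<^sub>m\<^sub>'\<close> is a unit multiple of the vanishing polynomial of \<open>B m'\<close>.\<close>
lemma block_value_diff_unit:
  assumes m: "m \<in> {1..l}" and m': "m' \<in> {1..l}" and "m \<noteq> m'"
  shows "(block_value m - block_value m') dvd 1"
proof -
  obtain x where x: "x \<in> B m" using block_nonempty[OF m] by blast
  define h where "h = g - [:block_value m':]"
  have deg_h: "degree h = r + 1"
  proof -
    have "h = g + - [:block_value m':]" by (simp add: h_def)
    then show ?thesis
      using degree_g degree_add_eq_left[of "- [:block_value m':]" g] by simp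
  qed
  have "lead_coeff h = lead_coeff g"
    using deg_h degree_g by (simp add: h_def)
  moreover have "h = smult (lead_coeff h) (vanishing_poly (B m'))"
    using finite_block[OF m'] unit_differences_subset_points[OF block_subset_points[OF m']]
  proof (rule eq_smult_vanishing_poly)
    show "poly h y = 0" if "y \<in> B m'" for y
      using poly_g_block[OF m' that] by (simp add: h_def)
  qed (simp add: deg_h card_block[OF m'])
  ultimately have "poly h x = lead_coeff g * (\<Prod>b\<in>B m'. x - b)"
    by (metis poly_smult poly_vanishing_poly)
  moreover have "(\<Prod>b\<in>B m'. x - b) dvd 1"
  proof (rule prod_dvd_1)
    fix b assume b: "b \<in> B m'"
    have "x \<noteq> b" using disjoint_blocks[OF m m' \<open>m \<noteq> m'\<close>] x b by blast
    then show "(x - b) dvd 1"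
      using x b block_subset_points[OF m] block_subset_points[OF m'] by (intro points_diff_unit) auto
  qed
  ultimately have "poly h x dvd 1"
    using lead_coeff_g_unit by (simp add: mult_dvd_1)
  then show ?thesis
    using poly_g_block[OF m x] by (simp add: h_def)
qed

lemma inj_on_block_value: "inj_on block_value {1..l}"
proof (rule inj_onI, rule ccontr)
  fix m m' assume "m \<in> {1..l}" "m' \<in> {1..l}" "block_value m = block_value m'" "m \<noteq> m'"
  then show False using block_value_diff_unit[of m m'] by simp
qed

lemma unit_differences_block_values: "unit_differences (block_value ` {1..l})"
  unfolding unit_differences_def
proof clarify
  fix m m' assume "m \<in> {1..l}" "m' \<in> {1..l}" "block_value m \<noteq> block_value m'"
  then show "(block_value m - block_value m') dvd 1"
    by (intro block_value_diff_unit) auto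
qed

lemma encode_eq_poly_block_poly: "poly g x = v \<Longrightarrow> encode a x = poly (block_poly a v) x"
  unfolding encode_def block_poly_def
  by (simp add: poly_sum poly_monom sum_distrib_right mult.assoc)

lemma degree_block_poly: "degree (block_poly a v) < r"
proof -
  have "degree (block_poly a v) \<le> r - 1"
    unfolding block_poly_def
    by (rule degree_sum_le) (auto intro: order.trans[OF degree_monom_le])
  then show ?thesis using r_pos by simp
qed

lemma coeff_block_poly: "i < r \<Longrightarrow> coeff (block_poly a v) i = (\<Sum>j<t. a i j * v ^ j)"
  unfolding block_poly_def by (simp add: coeff_sum coeff_monom)

lemma encode_diff: "encode (\<lambda>i j. a i j - a' i j) x = encode a x - encode a' x"
  unfolding encode_def by (simp add: left_diff_distrib sum_subtractf)

lemma encode_cong: "(\<And>i j. i < r \<Longrightarrow> j < t \<Longrightarrow> a i j = a' i j) \<Longrightarrow> encode a x = encode a' x"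
  unfolding encode_def by (intro sum.cong refl) auto

lemma block_poly_eq_0:
  assumes m: "m \<in> {1..l}" and zero: "\<And>x. x \<in> B m \<Longrightarrow> encode a x = 0"
  shows "block_poly a (block_value m) = 0"
proof (rule poly_eq_0_if_roots)
  show "unit_differences (B m)"
    using block_subset_points[OF m] by (rule unit_differences_subset_points)
  show "poly (block_poly a (block_value m)) x = 0" if "x \<in> B m" for x
    using zero[OF that] encode_eq_poly_block_poly[OF poly_g_block[OF m that]] by simp
  show "degree (block_poly a (block_value m)) < card (B m)"
    using degree_block_poly card_block[OF m] by (simp add: less_SucI)
qed

text \<open>Interpolation first inside each block, then in the block values.\<close>
lemma encode_eq_0_imp_eq_0:
  assumes zero: "\<And>x. x \<in> points \<Longrightarrow> encode a x = 0" and "i < r" "j < t"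
  shows "a i j = 0"
proof -
  define P where "P = (\<Sum>j<t. monom (a i j) j)"
  have "P = 0"
  proof (rule poly_eq_0_if_roots[OF unit_differences_block_values])
    fix v assume "v \<in> block_value ` {1..l}"
    then obtain m where m: "m \<in> {1..l}" and v: "v = block_value m" by blast
    have "block_poly a v = 0"
      unfolding v using m by (rule block_poly_eq_0) (intro zero subsetD[OF block_subset_points[OF m]])
    then show "poly P v = 0"
      using coeff_block_poly[OF \<open>i < r\<close>, of a v] by (simp add: P_def poly_sum poly_monom)
  next
    have "degree P \<le> t - 1"
      unfolding P_def by (rule degree_sum_le) (auto intro: order.trans[OF degree_monom_le])
    then show "degree P < card (block_value ` {1..l})"
      using t card_image[OF inj_on_block_value] by simp
  qed
  then have "coeff P j = 0" by simp
  then show ?thesis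
    using \<open>j < t\<close> by (simp add: P_def coeff_sum coeff_monom)
qed

lemma codeword_eq_iff: "codeword a = codeword a' \<longleftrightarrow> (\<forall>i<r. \<forall>j<t. a i j = a' i j)"
proof
  assume eq: "codeword a = codeword a'"
  have zero: "encode (\<lambda>i j. a i j - a' i j) x = 0" if "x \<in> points" for x
    using fun_cong[OF eq, of x] that by (simp add: codeword_def encode_diff)
  show "\<forall>i<r. \<forall>j<t. a i j = a' i j"
    using encode_eq_0_imp_eq_0[OF zero] by simp
next
  assume "\<forall>i<r. \<forall>j<t. a i j = a' i j"
  then have "encode a x = encode a' x" for x by (intro encode_cong) simp
  then show "codeword a = codeword a'"
    by (simp add: fun_eq_iff codeword_def)
qed

lemma degree_enc_poly_le: "degree (enc_poly r t g a) \<le> (t - 1) * (r + 1) + (r - 1)"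
  unfolding enc_poly_def
proof (intro degree_sum_le)
  fix i j assume "i \<in> {..<r}" "j \<in> {..<t}"
  have "degree (smult (a i j) (g ^ j * monom 1 i)) \<le> degree (g ^ j) + degree (monom (1::'a) i)"
    by (rule order.trans[OF degree_smult_le degree_mult_le])
  also have "\<dots> \<le> (r + 1) * j + i"
    using degree_power_le[of g j] degree_monom_le[of "1::'a" i] degree_g by simp
  also have "\<dots> \<le> (r + 1) * (t - 1) + (r - 1)"
    using \<open>i \<in> {..<r}\<close> \<open>j \<in> {..<t}\<close> by (intro add_mono mult_le_mono2) auto
  finally show "degree (smult (a i j) (g ^ j * monom 1 i)) \<le> (t - 1) * (r + 1) + (r - 1)"
    by (simp add: mult.commute)
qed simp_all

lemma hamming_dist_codeword_ge:
  assumes "codeword a \<noteq> codeword a'"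
  shows "card points - ((t - 1) * (r + 1) + (r - 1)) \<le> hamming_dist points (codeword a) (codeword a')"
proof -
  define f where "f = enc_poly r t g (\<lambda>i j. a i j - a' i j)"
  have poly_f: "poly f x = encode a x - encode a' x" for x
    unfolding f_def poly_enc_poly encode_diff ..
  define Z where "Z = {x \<in> points. encode a x = encode a' x}"
  have Z: "Z \<subseteq> points" unfolding Z_def by blast
  have "f \<noteq> 0"
  proof
    assume "f = 0"
    then have "encode a x = encode a' x" for x using poly_f[of x] by simp
    then have "codeword a = codeword a'" by (intro ext) (simp add: codeword_def)
    with assms show False ..
  qed
  have "card Z \<le> degree f"
    using unit_differences_subset_points[OF Z] \<open>f \<noteq> 0\<close>
    by (rule card_roots_le_degree) (simp add: Z_def poly_f)
  also have "\<dots> \<le> (t - 1) * (r + 1) + (r - 1)"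
    unfolding f_def by (rule degree_enc_poly_le)
  finally have "card points - ((t - 1) * (r + 1) + (r - 1)) \<le> card points - card Z"
    by simp
  also have "\<dots> = card (points - Z)"
    using Z finite_points by (simp add: card_Diff_subset finite_subset)
  also have "points - Z = {x \<in> points. codeword a x \<noteq> codeword a' x}"
    unfolding Z_def codeword_def by auto
  finally show ?thesis unfolding hamming_dist_def .
qed

lemma encode_product:
  assumes "degree Q < r" "degree P < t"
  shows "encode (\<lambda>i j. coeff Q i * coeff P j) x = poly Q x * poly P (poly g x)"
proof -
  have "encode (\<lambda>i j. coeff Q i * coeff P j) x
      = (\<Sum>i<r. \<Sum>j<t. (coeff Q i * x ^ i) * (coeff P j * poly g x ^ j))"
    unfolding encode_def by (intro sum.cong refl) (simp add: ac_simps)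
  also have "\<dots> = (\<Sum>i<r. coeff Q i * x ^ i) * (\<Sum>j<t. coeff P j * poly g x ^ j)"
    by (simp add: sum_product)
  finally show ?thesis
    using poly_eq_sum_coeff_lessThan[OF assms(1)] poly_eq_sum_coeff_lessThan[OF assms(2)] by simp
qed

lemma codeword_zero: "codeword (\<lambda>_ _. 0) = (\<lambda>_. 0)"
  by (simp add: fun_eq_iff codeword_def encode_def)

lemma low_weight_encoding:
  assumes S: "S \<subseteq> B t" "card S = r - 1"
  defines "a \<equiv> \<lambda>i j. coeff (vanishing_poly S) i * coeff (vanishing_poly (block_value ` {1..<t})) j"
  shows encode_low_weight_zero: "\<And>x. x \<in> (\<Union>m\<in>{1..<t}. B m) \<union> S \<Longrightarrow> encode a x = 0"
    and encode_low_weight_unit: "\<And>x. x \<in> B t - S \<Longrightarrow> encode a x dvd 1"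
proof -
  have t_block: "t \<in> {1..l}" using t by simp
  have fin_S: "finite S" using S(1) finite_block[OF t_block] by (rule finite_subset)
  have deg_Q: "degree (vanishing_poly S) < r"
    using S(2) r_pos fin_S by (simp add: degree_vanishing_poly)
  have "inj_on block_value {1..<t}"
    using t by (intro inj_on_subset[OF inj_on_block_value]) auto
  then have deg_P: "degree (vanishing_poly (block_value ` {1..<t})) < t"
    using t by (simp add: degree_vanishing_poly card_image)
  have enc: "encode a x = (\<Prod>s\<in>S. x - s) * (\<Prod>v\<in>block_value ` {1..<t}. poly g x - v)"
    for x unfolding a_def encode_product[OF deg_Q deg_P] poly_vanishing_poly ..
  show "encode a x = 0" if "x \<in> (\<Union>m\<in>{1..<t}. B m) \<union> S" for x
    using that
  proof
    assume "x \<in> (\<Union>m\<in>{1..<t}. B m)"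
    then obtain m where m: "m \<in> {1..<t}" "x \<in> B m" by blast
    then have "poly g x = block_value m" using t by (intro poly_g_block) auto
    then have "(\<Prod>v\<in>block_value ` {1..<t}. poly g x - v) = 0"
      using m(1) by (intro prod_zero) auto
    then show ?thesis by (simp add: enc)
  next
    assume "x \<in> S"
    then have "(\<Prod>s\<in>S. x - s) = 0" using fin_S by (intro prod_zero) auto
    then show ?thesis by (simp add: enc)
  qed
  show "encode a x dvd 1" if x: "x \<in> B t - S" for x
    unfolding enc
  proof (intro mult_dvd_1 prod_dvd_1)
    fix s assume "s \<in> S"
    then show "(x - s) dvd 1"
      using x S(1) block_subset_points[OF t_block] by (intro points_diff_unit) auto
  next
    fix v assume "v \<in> block_value ` {1..<t}"
    then obtain m where "m \<in> {1..<t}" "v = block_value m" by blast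
    then show "(poly g x - v) dvd 1"
      using x t poly_g_block[OF t_block] by (simp add: block_value_diff_unit)
  qed
qed

lemma card_earlier_blocks_Un:
  assumes S: "S \<subseteq> B t" "card S = r - 1"
  shows "card ((\<Union>m\<in>{1..<t}. B m) \<union> S) = (t - 1) * (r + 1) + (r - 1)"
proof -
  have t_block: "t \<in> {1..l}" using t by simp
  have "B m \<inter> B t = {}" if "m \<in> {1..<t}" for m
    using that t by (intro disjoint_blocks) auto
  then have "(\<Union>m\<in>{1..<t}. B m) \<inter> S = {}" using S(1) by blast
  moreover have "card (\<Union>m\<in>{1..<t}. B m) = (r + 1) * (t - 1)"
    using t by (subst card_UN_blocks) auto
  moreover have "finite (\<Union>m\<in>{1..<t}. B m)"
    using t finite_block by auto
  moreover have "finite S" using S(1) finite_block[OF t_block] by (rule finite_subset)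
  ultimately show ?thesis
    using S(2) by (simp add: card_Un_disjoint mult.commute)
qed

lemma exists_low_weight_codeword:
  obtains a where "codeword a \<noteq> codeword (\<lambda>_ _. 0)"
    and "hamming_dist points (codeword a) (codeword (\<lambda>_ _. 0))
           \<le> card points - ((t - 1) * (r + 1) + (r - 1))"
proof -
  have t_block: "t \<in> {1..l}" using t by simp
  have "r - 1 \<le> card (B t)" using card_block[OF t_block] by simp
  then obtain S where S: "S \<subseteq> B t" "card S = r - 1" "finite S"
    by (rule obtain_subset_with_card_n)
  have "B t - S \<noteq> {}"
  proof
    assume "B t - S = {}"
    then have "card (B t) \<le> card S" using S(3) by (intro card_mono) auto
    then show False using S(2) card_block[OF t_block] by simp
  qed
  then obtain x0 where x0: "x0 \<in> B t - S" by blast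
  let ?a = "\<lambda>i j. coeff (vanishing_poly S) i * coeff (vanishing_poly (block_value ` {1..<t})) j"
  define Z where "Z = (\<Union>m\<in>{1..<t}. B m) \<union> S"
  have Z: "Z \<subseteq> points"
    using S(1) t block_subset_points unfolding Z_def by (intro Un_least UN_least) auto
  have "encode ?a x0 \<noteq> 0"
    using encode_low_weight_unit[OF S(1,2) x0] by auto
  then have "codeword ?a \<noteq> codeword (\<lambda>_ _. 0)"
    using x0 block_subset_points[OF t_block] by (auto simp: codeword_zero codeword_def fun_eq_iff)
  moreover have "{x \<in> points. codeword ?a x \<noteq> codeword (\<lambda>_ _. 0) x} \<subseteq> points - Z"
    using encode_low_weight_zero[OF S(1,2)] unfolding Z_def by (auto simp: codeword_zero codeword_def)
  then have "hamming_dist points (codeword ?a) (codeword (\<lambda>_ _. 0)) \<le> card points - card Z"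
    unfolding hamming_dist_def using Z finite_points
    by (metis (no_types, lifting) card_Diff_subset card_mono finite_Diff finite_subset)
  ultimately show ?thesis
    using that card_earlier_blocks_Un[OF S(1,2)] unfolding Z_def by simp
qed

lemma min_dist_codewords:
  "min_dist points (range codeword) = card points - ((t - 1) * (r + 1) + (r - 1))"
proof -
  define M where "M = {hamming_dist points c c' | c c'. c \<in> range codeword \<and> c' \<in> range codeword \<and> c \<noteq> c'}"
  define d where "d = card points - ((t - 1) * (r + 1) + (r - 1))"
  have "M \<subseteq> {..card points}"
    unfolding M_def hamming_dist_def using finite_points by (auto intro: card_mono)
  then have fin: "finite M" by (rule finite_subset) simp
  obtain a where "codeword a \<noteq> codeword (\<lambda>_ _. 0)"
    and a: "hamming_dist points (codeword a) (codeword (\<lambda>_ _. 0)) \<le> d"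
    using exists_low_weight_codeword unfolding d_def by blast
  then have mem: "hamming_dist points (codeword a) (codeword (\<lambda>_ _. 0)) \<in> M"
    unfolding M_def by blast
  have "d \<le> m" if "m \<in> M" for m
    using that hamming_dist_codeword_ge unfolding M_def d_def by auto
  then have "d \<le> Min M" using fin mem by (intro Min.boundedI) auto
  moreover have "Min M \<le> d" using Min_le[OF fin mem] a by simp
  ultimately show ?thesis unfolding min_dist_def M_def[symmetric] d_def by simp
qed

text \<open>On \<open>B j\<close> a codeword is a polynomial of degree \<open>< r\<close>, fixed by its values at the other \<open>r\<close> points.\<close>
lemma recovering_set_block:
  assumes j: "j \<in> {1..l}" and \<alpha>: "\<alpha> \<in> B j"
  shows "recovering_set (range codeword) \<alpha> (B j - {\<alpha>})"
proof (rule recovering_set_if_determined)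
  fix c c' assume "c \<in> range codeword" "c' \<in> range codeword"
  then obtain a a' where c: "c = codeword a" and c': "c' = codeword a'" by blast
  assume agree: "\<And>x. x \<in> B j - {\<alpha>} \<Longrightarrow> c x = c' x"
  define h where "h = block_poly a (block_value j) - block_poly a' (block_value j)"
  have poly_h: "poly h x = encode a x - encode a' x" if "x \<in> B j" for x
    using encode_eq_poly_block_poly[OF poly_g_block[OF j that]] by (simp add: h_def)
  have "h = 0"
  proof (rule poly_eq_0_if_roots)
    show "unit_differences (B j - {\<alpha>})"
      using block_subset_points[OF j] by (intro unit_differences_subset_points) blast
    show "poly h x = 0" if "x \<in> B j - {\<alpha>}" for x
      using agree[OF that] that block_subset_points[OF j] by (auto simp: poly_h c c' codeword_def)
    show "degree h < card (B j - {\<alpha>})"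
      using card_block[OF j] \<alpha> degree_block_poly unfolding h_def
      by (simp add: degree_diff_less)
  qed
  then show "c \<alpha> = c' \<alpha>"
    using poly_h[OF \<alpha>] by (simp add: c c' codeword_def)
qed simp

lemma has_locality_codewords: "has_locality (range codeword) points r"
  unfolding has_locality_def
proof
  fix \<alpha> assume "\<alpha> \<in> points"
  then obtain j where j: "j \<in> {1..l}" "\<alpha> \<in> B j" unfolding points_def by blast
  then have "B j - {\<alpha>} \<subseteq> points - {\<alpha>}" "card (B j - {\<alpha>}) \<le> r"
    using block_subset_points[OF j(1)] card_block[OF j(1)] by auto
  then show "\<exists>S. S \<subseteq> points - {\<alpha>} \<and> card S \<le> r \<and> recovering_set (range codeword) \<alpha> S"
    using recovering_set_block[OF j] by blast
qed

lemma linear_code_codewords: "linear_code points (range codeword)"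
proof -
  have add: "(\<lambda>x. codeword a x + codeword a' x) = codeword (\<lambda>i j. a i j + a' i j)" for a a'
    by (simp add: fun_eq_iff codeword_def encode_def distrib_right sum.distrib)
  have smult: "(\<lambda>x. s * codeword a x) = codeword (\<lambda>i j. s * a i j)" for s a
    by (simp add: fun_eq_iff codeword_def encode_def sum_distrib_left mult.assoc)
  have outside: "codeword a x = 0" if "x \<notin> points" for a x
    using that by (simp add: codeword_def)
  have "(\<lambda>_. 0) \<in> range codeword"
    using codeword_zero by (metis rangeI)
  then show ?thesis
    unfolding linear_code_def by (auto simp: outside add smult)
qed

definition coeffs_of :: "(nat \<Rightarrow> 'a) \<Rightarrow> nat \<Rightarrow> nat \<Rightarrow> 'a" where
  "coeffs_of w i j = w (j * r + i)"

definition unit_coeffs :: "nat \<Rightarrow> nat \<Rightarrow> nat \<Rightarrow> 'a" where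
  "unit_coeffs k i j = (if i = k mod r \<and> j = k div r then 1 else 0)"

lemma encode_flat:
  "encode a x = (\<Sum>k<r * t. a (k mod r) (k div r) * (poly g x ^ (k div r) * x ^ (k mod r)))"
  unfolding encode_def using sum_mod_div[of r "\<lambda>i j. a i j * (poly g x ^ j * x ^ i)" t] r_pos
  by (simp add: mult.assoc)

lemma encode_unit_coeffs:
  assumes "k < r * t"
  shows "encode (unit_coeffs k) x = poly g x ^ (k div r) * x ^ (k mod r)"
proof -
  have "unit_coeffs k (k' mod r) (k' div r) = (if k' = k then 1 else 0)" for k'
    unfolding unit_coeffs_def by (metis div_mult_mod_eq)
  then have "encode (unit_coeffs k) x
      = (\<Sum>k'<r * t. if k' = k then poly g x ^ (k' div r) * x ^ (k' mod r) else 0)"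
    unfolding encode_flat by (intro sum.cong refl) simp
  also have "\<dots> = poly g x ^ (k div r) * x ^ (k mod r)"
    using assms by simp
  finally show ?thesis .
qed

lemma codeword_coeffs_of:
  "codeword (coeffs_of w) = (\<lambda>x. \<Sum>k<r * t. w k * codeword (unit_coeffs k) x)"
proof
  fix x
  have "coeffs_of w (k mod r) (k div r) = w k" for k
    unfolding coeffs_of_def by (metis div_mult_mod_eq)
  then have "encode (coeffs_of w) x = (\<Sum>k<r * t. w k * (poly g x ^ (k div r) * x ^ (k mod r)))"
    unfolding encode_flat by simp
  also have "\<dots> = (\<Sum>k<r * t. w k * encode (unit_coeffs k) x)"
    by (intro sum.cong refl) (simp add: encode_unit_coeffs)
  finally have "encode (coeffs_of w) x = (\<Sum>k<r * t. w k * encode (unit_coeffs k) x)" .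
  then show "codeword (coeffs_of w) x = (\<Sum>k<r * t. w k * codeword (unit_coeffs k) x)"
    by (simp add: codeword_def)
qed

lemma bij_betw_codeword_coeffs_of:
  "bij_betw (\<lambda>w. codeword (coeffs_of w)) ({..<r * t} \<rightarrow>\<^sub>E UNIV) (range codeword)"
proof (rule bij_betw_imageI)
  show "inj_on (\<lambda>w. codeword (coeffs_of w)) ({..<r * t} \<rightarrow>\<^sub>E UNIV)"
  proof (rule inj_onI)
    fix w w' assume w: "w \<in> {..<r * t} \<rightarrow>\<^sub>E UNIV" and w': "w' \<in> {..<r * t} \<rightarrow>\<^sub>E UNIV"
      and "codeword (coeffs_of w) = codeword (coeffs_of w')"
    then have eq: "\<forall>i<r. \<forall>j<t. coeffs_of w i j = coeffs_of w' i j"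
      by (simp add: codeword_eq_iff)
    show "w = w'"
    proof (rule PiE_ext[OF w w'])
      fix k assume "k \<in> {..<r * t}"
      then have "k mod r < r" "k div r < t"
        using r_pos by (auto simp: less_mult_imp_div_less mult.commute)
      then show "w k = w' k"
        using eq unfolding coeffs_of_def by (metis div_mult_mod_eq)
    qed
  qed
  show "(\<lambda>w. codeword (coeffs_of w)) ` ({..<r * t} \<rightarrow>\<^sub>E UNIV) = range codeword"
  proof (intro equalityI subsetI)
    fix c assume "c \<in> range codeword"
    then obtain a where c: "c = codeword a" by blast
    define w where "w = restrict (\<lambda>k. a (k mod r) (k div r)) {..<r * t}"
    have "\<forall>i<r. \<forall>j<t. coeffs_of w i j = a i j"
      by (simp add: coeffs_of_def w_def mult_add_less_mult)
    then have "codeword (coeffs_of w) = c" unfolding c codeword_eq_iff .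
    moreover have "w \<in> {..<r * t} \<rightarrow>\<^sub>E UNIV" unfolding w_def by simp
    ultimately show "c \<in> (\<lambda>w. codeword (coeffs_of w)) ` ({..<r * t} \<rightarrow>\<^sub>E UNIV)" by blast
  qed auto
qed

lemma free_rank_codewords: "free_rank (range codeword) (r * t)"
  unfolding free_rank_def
proof (intro exI conjI allI impI ballI)
  fix k show "codeword (unit_coeffs k) \<in> range codeword" by simp
next
  fix c assume "c \<in> range codeword"
  then obtain w where w: "w \<in> {..<r * t} \<rightarrow>\<^sub>E UNIV" "c = codeword (coeffs_of w)"
    using bij_betw_codeword_coeffs_of unfolding bij_betw_def by blast
  show "\<exists>!w. w \<in> {..<r * t} \<rightarrow>\<^sub>E UNIV \<and> c = (\<lambda>x. \<Sum>k<r * t. w k * codeword (unit_coeffs k) x)"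
  proof (rule ex1I[of _ w])
    fix w' assume "w' \<in> {..<r * t} \<rightarrow>\<^sub>E UNIV \<and> c = (\<lambda>x. \<Sum>k<r * t. w' k * codeword (unit_coeffs k) x)"
    then show "w' = w"
      using w bij_betw_codeword_coeffs_of unfolding codeword_coeffs_of[symmetric] bij_betw_def
      by (metis inj_onD)
  qed (use w codeword_coeffs_of in simp)
qed

lemma card_codewords: "card (range codeword) = card (UNIV :: 'a set) ^ (r * t)"
  using bij_betw_same_card[OF bij_betw_codeword_coeffs_of] by (simp add: card_PiE)

end

lemma tamo_barg_distance_arith:
  fixes r l t :: nat
  assumes "1 \<le> r" "1 \<le> t" "t \<le> l"
  shows "int ((r + 1) * l - ((t - 1) * (r + 1) + (r - 1)))
           = int ((r + 1) * l) - int (r * t) - int (r * t div r) + 2"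
proof -
  obtain r' t' where r': "r = Suc r'" and t': "t = Suc t'"
    using assms(1,2) by (metis Suc_le_D One_nat_def)
  have "(t - 1) * (r + 1) + (r - 1) \<le> (r + 1) * t"
    by (simp add: r' t' algebra_simps)
  also have "\<dots> \<le> (r + 1) * l" using assms(3) by (rule mult_le_mono2)
  finally have "int ((r + 1) * l - ((t - 1) * (r + 1) + (r - 1)))
                  = int ((r + 1) * l) - int ((t - 1) * (r + 1) + (r - 1))"
    by (simp add: of_nat_diff)
  moreover have "int ((t - 1) * (r + 1) + (r - 1)) = int (r * t) + int t - 2"
    by (simp add: r' t' algebra_simps)
  ultimately show ?thesis using assms(1) by simp
qed

theorem mainTheorem6:
  fixes B :: "nat \<Rightarrow> 'a::{comm_ring_1, finite} set"
    and g :: "'a poly"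
    and r l t :: nat
  assumes R: "chain_ring TYPE('a)"
    and r: "r \<ge> 1" and l: "l \<ge> 1"
    and disj: "\<forall>i\<in>{1..l}. \<forall>j\<in>{1..l}. i \<noteq> j \<longrightarrow> B i \<inter> B j = {}"
    and card: "\<forall>i\<in>{1..l}. card (B i) = r + 1"
    and wc: "well_conditioned (\<Union>i\<in>{1..l}. B i)"
    and good: "good_poly r l B g"
    and t: "1 \<le> t" "t \<le> l"
  defines "A \<equiv> \<Union>i\<in>{1..l}. B i"
    and "n \<equiv> (r + 1) * l"
    and "K \<equiv> r * t"
    and "C \<equiv> tamo_barg_code (\<Union>i\<in>{1..l}. B i) r t g"
  shows "card A = n \<and> linear_code A C \<and> free_rank C K \<and> card C = card (UNIV::'a set) ^ K
     \<and> (\<forall>j\<in>{1..l}. \<forall>\<alpha>\<in>B j. recovering_set C \<alpha> (B j - {\<alpha>}))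
     \<and> has_locality C A r
     \<and> int (min_dist A C) = int n - int K - int (K div r) + 2"
proof -
  have "unit_differences (\<Union>i\<in>{1..l}. B i)"
    using R wc unfolding chain_ring_def by (intro well_conditioned_imp_unit_differences) blast+
  then interpret tamo_barg B g r l t
    using r disj card good t by unfold_locales auto
  have A: "A = points" and C: "C = range codeword"
    unfolding A_def C_def points_def[symmetric] by (simp_all add: tamo_barg_code_eq)
  show ?thesis
    unfolding A C n_def K_def
    using card_points linear_code_codewords free_rank_codewords card_codewords
      recovering_set_block has_locality_codewords min_dist_codewords
      tamo_barg_distance_arith[OF r t]
    by simp
qed

end
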